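(* For $n,m\ge 0$ let $f(n,m)$ be the number of linked cycles on $[n]$ with exactly $m$ singly covered minimal elements. Then $f(1,1)=1$, $f(n,0)=0$ for $n\ge1$, $f(n,m)=0$ if $n<m$, and for all $n\ge2$, $m\ge1$, $$f(n,m)=m\,f(n,m+1)+f(n-1,m-1).$$
   Context: Two finite sets of integers $E,F$ are nearly disjoint if for every $i\in E\cap F$ either ($i=\min(E)$, $|E|>1$, $i\ne\min(F)$) or ($i=\min(F)$, $|F|>1$, $i\ne\min(E)$). A linked partition of $[n]$ is a set of nonempty subsets (blocks) of $[n]$ with union $[n]$, any two distinct blocks nearly disjoint; each element lies in one or two blocks (singly/doubly covered). A singly covered minimal element is a singly covered element that is the minimum of its block. A linked cycle on $[n]$ is a linked partition of $[n]$ together with a cyclic arrangement of the elements of each block. *)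

theory Defs
  imports "HOL-Combinatorics.Permutations"
begin

definition nearly_disjoint :: "nat set \<Rightarrow> nat set \<Rightarrow> bool" where
  "nearly_disjoint E F \<longleftrightarrow>
     (\<forall>i \<in> E \<inter> F. (i = Min E \<and> card E > 1 \<and> i \<noteq> Min F)
                   \<or> (i = Min F \<and> card F > 1 \<and> i \<noteq> Min E))"

definition linked_partition :: "nat \<Rightarrow> nat set set \<Rightarrow> bool" where
  "linked_partition n P \<longleftrightarrow>
     (\<forall>B \<in> P. B \<noteq> {} \<and> B \<subseteq> {1..n}) \<and> \<Union>P = {1..n} \<and>
     (\<forall>E \<in> P. \<forall>F \<in> P. E \<noteq> F \<longrightarrow> nearly_disjoint E F)"

definition singly_covered_minimal :: "nat set set \<Rightarrow> nat set" where
  "singly_covered_minimal P =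
     {i. \<exists>B \<in> P. i = Min B \<and> (\<forall>B' \<in> P. i \<in> B' \<longrightarrow> B' = B)}"

definition cyclic_arrangement :: "nat set \<Rightarrow> (nat \<Rightarrow> nat) \<Rightarrow> bool" where
  "cyclic_arrangement B \<sigma> \<longleftrightarrow>
     \<sigma> permutes B \<and> (\<forall>x \<in> B. \<forall>y \<in> B. \<exists>k. (\<sigma> ^^ k) x = y)"

definition linked_cycle :: "nat \<Rightarrow> (nat set \<times> (nat \<Rightarrow> nat)) set \<Rightarrow> bool" where
  "linked_cycle n C \<longleftrightarrow>
     linked_partition n (fst ` C) \<and> inj_on fst C \<and>
     (\<forall>(B, \<sigma>) \<in> C. cyclic_arrangement B \<sigma>)"

definition f_lc :: "nat \<Rightarrow> nat \<Rightarrow> nat" where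
  "f_lc n m = card {C. linked_cycle n C \<and> card (singly_covered_minimal (fst ` C)) = m}"

end

theory Submission
  imports Defs
begin

(* Every linked cycle on [N+1] arises from a unique linked cycle on [N] by one of three ways of
   inserting N+1: as a new singleton block, which creates one more singly covered minimal
   element; into the cycle of an existing block B right after one of its |B| elements; or as a
   new block {a, N+1} attached to an element a that lies in a single block without being its
   minimum.  The last two keep the singly covered minimal elements, and double counting of
   incidences shows that they offer 2N - m choices when there are m of them.  Hence
     f(N+1, k+1) = f(N, k) + (2N - k - 1) f(N, k+1).
   Solving this recurrence gives f(k+1+j, k+1) = (k+2j)! / (2^j k! j!), which yields
   (k+1) f(N+1, k+2) = (2N - k - 1) f(N, k+1); substituting this into the recurrence gives the
   claimed identity. *)

section \<open>Cyclic arrangements\<close>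

definition reaches :: "('a \<Rightarrow> 'a) \<Rightarrow> 'a \<Rightarrow> 'a \<Rightarrow> bool" where
  "reaches s x y \<longleftrightarrow> (\<exists>k. (s ^^ k) x = y)"

lemma reaches_refl [simp]: "reaches s x x"
  unfolding reaches_def by (metis funpow_0)

lemma reaches_step [simp]: "reaches s x (s x)"
  unfolding reaches_def by (rule exI[of _ 1]) simp

lemma reaches_trans: "reaches s x y \<Longrightarrow> reaches s y z \<Longrightarrow> reaches s x z"
  unfolding reaches_def by (metis funpow_add o_apply)

lemma cyclic_arrangement_iff_reaches:
  "cyclic_arrangement B s \<longleftrightarrow> s permutes B \<and> (\<forall>x\<in>B. \<forall>y\<in>B. reaches s x y)"
  unfolding cyclic_arrangement_def reaches_def ..

lemma funpow_permutes_in: "s permutes B \<Longrightarrow> x \<in> B \<Longrightarrow> (s ^^ k) x \<in> B"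
  by (induction k) (auto simp: permutes_in_image)

lemma cyclic_arrangement_insert_after:
  assumes cyc: "cyclic_arrangement B s" and n: "n \<notin> B" and x: "x \<in> B"
  shows "cyclic_arrangement (insert n B) (s \<circ> transpose x n)"
proof -
  let ?t = "s \<circ> transpose x n"
  have s: "s permutes B" using cyc by (simp add: cyclic_arrangement_def)
  have sn: "s n = n" using s n by (simp add: permutes_not_in)
  have "?t permutes insert n B"
    by (rule permutes_compose[OF permutes_swap_id]) (use x permutes_subset[OF s] in auto)
  moreover have step: "reaches ?t u (s u)" if "u \<in> B" for u
  proof (cases "u = x")
    case True
    then have "reaches ?t u n" using reaches_step[of ?t u] sn by simp
    then show ?thesis using reaches_step[of ?t n] True reaches_trans by fastforce
  next
    case False
    then have "u \<noteq> n" using that n by auto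
    then show ?thesis using reaches_step[of ?t u] False by simp
  qed
  have "reaches ?t u ((s ^^ k) u)" if "u \<in> B" for u k
  proof (induction k)
    case (Suc k)
    have "(s ^^ Suc k) u = s ((s ^^ k) u)" by simp
    then show ?case
      using reaches_trans[OF Suc.IH step[OF funpow_permutes_in[OF s that, of k]]] by (simp only:)
  qed simp
  then have inB: "reaches ?t u v" if "u \<in> B" "v \<in> B" for u v
    using cyc that unfolding cyclic_arrangement_def by metis
  have "reaches ?t x n" "reaches ?t n (s x)" "s x \<in> B"
    using reaches_step[of ?t x] reaches_step[of ?t n] sn x s by (auto simp: permutes_in_image)
  then have "reaches ?t u v" if "u \<in> insert n B" "v \<in> insert n B" for u v
    using that x inB reaches_trans by (metis insertE reaches_refl)
  ultimately show ?thesis by (simp add: cyclic_arrangement_iff_reaches)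
qed

lemma permutes_remove_point:
  assumes t: "t permutes insert n B" and n: "n \<notin> B" and tn: "t n \<noteq> n"
  defines "s \<equiv> transpose n (t n) \<circ> t" and "x \<equiv> inv t n"
  shows "s permutes B" and "x \<in> B" and "t x = n" and "s x = t n"
    and "\<And>u. u \<noteq> x \<Longrightarrow> u \<noteq> n \<Longrightarrow> s u = t u" and "s \<circ> transpose x n = t"
proof -
  show "s permutes B" unfolding s_def using permutes_insert_lemma[OF t] .
  show tx: "t x = n" unfolding x_def using t by (simp add: permutes_inverses)
  have "x \<in> insert n B" using tx t by (metis insertI1 permutes_in_image)
  then show "x \<in> B" using tx tn by auto
  have inj: "inj t" using t by (rule permutes_inj)
  show s_other: "s u = t u" if "u \<noteq> x" "u \<noteq> n" for u
    using that tx inj unfolding s_def by (auto simp: transpose_def dest: injD)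
  show sx: "s x = t n" using tx unfolding s_def by simp
  show "s \<circ> transpose x n = t"
  proof
    fix u show "(s \<circ> transpose x n) u = t u"
      using s_other[of u] sx tx \<open>x \<in> B\<close> n by (cases "u = x \<or> u = n") (auto simp: s_def)
  qed
qed

lemma cyclic_arrangement_remove:
  assumes cyc: "cyclic_arrangement (insert n B) t" and n: "n \<notin> B" and ne: "B \<noteq> {}"
  defines "s \<equiv> transpose n (t n) \<circ> t" and "x \<equiv> inv t n"
  shows "cyclic_arrangement B s" and "x \<in> B" and "s \<circ> transpose x n = t"
proof -
  have t: "t permutes insert n B" using cyc by (simp add: cyclic_arrangement_def)
  have tn: "t n \<noteq> n"
  proof
    assume "t n = n"
    then have "(t ^^ k) n = n" for k by (induction k) auto
    moreover obtain b where "b \<in> B" using ne by auto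
    moreover obtain k where "(t ^^ k) n = b" using cyc \<open>b \<in> B\<close> unfolding cyclic_arrangement_def by blast
    ultimately show False using n by auto
  qed
  note perm = permutes_remove_point[OF t n tn, folded s_def x_def]
  show "x \<in> B" "s \<circ> transpose x n = t" using perm(2,6) .
  txt \<open>Along the \<open>t\<close>-orbit, \<open>n\<close> is skipped by \<open>s\<close>; replacing \<open>n\<close> by its
    successor \<open>t n = s x\<close> turns every \<open>t\<close>-path into an \<open>s\<close>-path.\<close>
  define skip where "skip u = (if u = n then t n else u)" for u
  have "reaches s (skip u) (skip ((t ^^ k) u))" for u k
  proof (induction k)
    case (Suc k)
    define w where "w = (t ^^ k) u"
    have "reaches s (skip w) (skip (t w))"
    proof -
      consider "w = x" | "w = n" | "w \<noteq> x" "w \<noteq> n" by blast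
      then show ?thesis
      proof cases
        case 1 then show ?thesis using reaches_step[of s x] perm(2,3,4) n unfolding skip_def by auto
      next
        case 2
        have "t n \<in> B" using perm(1,2) by (simp flip: perm(4) add: permutes_in_image)
        then show ?thesis using 2 n unfolding skip_def by auto
      next
        case 3
        then have "t w \<noteq> n" using perm(3) permutes_inj[OF t] by (auto dest: injD)
        then show ?thesis using 3 perm(5) unfolding skip_def by (metis reaches_step)
      qed
    qed
    then show ?case using Suc.IH reaches_trans unfolding w_def by auto
  qed simp
  moreover have "skip u = u" if "u \<in> B" for u using that n unfolding skip_def by auto
  ultimately have "reaches s u v" if "u \<in> B" "v \<in> B" for u v
    using that cyc unfolding cyclic_arrangement_def by (metis insertI2)
  then show "cyclic_arrangement B s" using perm(1) by (simp add: cyclic_arrangement_iff_reaches)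
qed

lemma cyclic_arrangement_singleton_iff: "cyclic_arrangement {a} s \<longleftrightarrow> s = id"
  unfolding cyclic_arrangement_iff_reaches by auto

lemma cyclic_arrangement_doubleton_iff:
  assumes "a \<noteq> n"
  shows "cyclic_arrangement {a, n} t \<longleftrightarrow> t = transpose a n"
proof
  assume "cyclic_arrangement {a, n} t"
  then have cyc: "cyclic_arrangement (insert n {a}) t" by (simp add: insert_commute)
  note rem = cyclic_arrangement_remove[OF cyc _ insert_not_empty]
  have "inv t n = a" using rem(2) assms by simp
  then show "t = transpose a n"
    using rem(1,3) assms by (simp add: cyclic_arrangement_singleton_iff)
next
  assume "t = transpose a n"
  then show "cyclic_arrangement {a, n} t"
    using cyclic_arrangement_insert_after[of "{a}" id n a] assms
    by (simp add: cyclic_arrangement_singleton_iff insert_commute)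
qed

section \<open>Linked partitions\<close>

lemma nearly_disjoint_commute: "nearly_disjoint E F \<longleftrightarrow> nearly_disjoint F E"
  unfolding nearly_disjoint_def by blast

lemma linked_partition_blockD:
  assumes "linked_partition n P" "B \<in> P"
  shows "B \<noteq> {}" "B \<subseteq> {1..n}" "finite B" "Min B \<in> B"
proof -
  show "B \<noteq> {}" "B \<subseteq> {1..n}" using assms unfolding linked_partition_def by auto
  then show "finite B" using finite_subset by blast
  then show "Min B \<in> B" using \<open>B \<noteq> {}\<close> by simp
qed

lemma linked_partition_Union: "linked_partition n P \<Longrightarrow> \<Union>P = {1..n}"
  unfolding linked_partition_def by blast

lemma linked_partition_nearly_disjoint:
  "linked_partition n P \<Longrightarrow> E \<in> P \<Longrightarrow> F \<in> P \<Longrightarrow> E \<noteq> F \<Longrightarrow> nearly_disjoint E F"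
  unfolding linked_partition_def by blast

lemma linked_partition_common_element:
  assumes "linked_partition n P" "E \<in> P" "F \<in> P" "E \<noteq> F" "i \<in> E" "i \<in> F"
  shows "(i = Min E \<and> card E > 1 \<and> i \<noteq> Min F) \<or> (i = Min F \<and> card F > 1 \<and> i \<noteq> Min E)"
  using linked_partition_nearly_disjoint[OF assms(1-4)] assms(5,6)
  unfolding nearly_disjoint_def by blast

lemma linked_partition_no_triple_cover:
  assumes "linked_partition n P" "E \<in> P" "F \<in> P" "G \<in> P" "E \<noteq> F" "E \<noteq> G" "F \<noteq> G"
    "i \<in> E" "i \<in> F" "i \<in> G"
  shows False
  using linked_partition_common_element[OF assms(1,2,3,5,8,9)]
    linked_partition_common_element[OF assms(1,2,4,6,8,10)]
    linked_partition_common_element[OF assms(1,3,4,7,9,10)]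
  by argo

lemma linked_partition_max_unique:
  assumes "linked_partition n P" "E \<in> P" "F \<in> P" "n \<in> E" "n \<in> F"
  shows "E = F"
proof (rule ccontr)
  assume "E \<noteq> F"
  have "card X \<le> 1" if "X \<in> P" "n = Min X" for X
  proof -
    have "X \<subseteq> {n}"
    proof
      fix y assume "y \<in> X"
      then have "Min X \<le> y" "y \<le> n"
        using linked_partition_blockD[OF assms(1) that(1)] by auto
      then show "y \<in> {n}" using that(2) by simp
    qed
    then show ?thesis by (simp add: card_mono[of "{n}", simplified])
  qed
  moreover note linked_partition_common_element[OF assms(1-3) \<open>E \<noteq> F\<close> assms(4,5)]
  ultimately show False using assms(2,3) by fastforce
qed

lemma linked_partition_other_blocks:
  assumes "linked_partition (Suc N) P" "B \<in> P" "Suc N \<in> B" "X \<in> P" "X \<noteq> B"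
  shows "X \<subseteq> {1..N}"
  using linked_partition_max_unique[OF assms(1,4,2) _ assms(3)] assms(5)
    linked_partition_blockD(2)[OF assms(1,4)] by (auto simp: subset_iff le_Suc_eq)

lemma linked_partition_insertI:
  assumes "\<forall>B\<in>P. B \<noteq> {} \<and> B \<subseteq> {1..n}" "E \<noteq> {}" "E \<subseteq> {1..n}" "E \<union> \<Union>P = {1..n}"
    and "\<forall>B\<in>P. \<forall>F\<in>P. B \<noteq> F \<longrightarrow> nearly_disjoint B F"
    and "\<And>F. F \<in> P \<Longrightarrow> F \<noteq> E \<Longrightarrow> nearly_disjoint E F"
  shows "linked_partition n (insert E P)"
  using assms nearly_disjoint_commute unfolding linked_partition_def by auto

lemma singly_covered_minimal_subset:
  "linked_partition n P \<Longrightarrow> singly_covered_minimal P \<subseteq> {1..n}"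
  unfolding singly_covered_minimal_def using linked_partition_blockD(2,4) by fastforce

lemma singly_covered_minimal_insert:
  assumes "E \<notin> P"
  shows "singly_covered_minimal (insert E P) =
    {x. x = Min E \<and> x \<notin> \<Union>P} \<union> (singly_covered_minimal P - E)"
  using assms unfolding singly_covered_minimal_def by blast

definition singly_covered_nonminimal :: "nat set set \<Rightarrow> nat set" where
  "singly_covered_nonminimal P =
     {i. \<exists>B \<in> P. i \<in> B \<and> i \<noteq> Min B \<and> (\<forall>B' \<in> P. i \<in> B' \<longrightarrow> B' = B)}"

lemma singly_covered_nonminimal_subset:
  "linked_partition n P \<Longrightarrow> singly_covered_nonminimal P \<subseteq> {1..n}"
  unfolding singly_covered_nonminimal_def using linked_partition_blockD(2) by fastforce

lemma linked_partition_cover_count: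
  assumes lp: "linked_partition n P" and y: "y \<in> {1..n}"
  shows "card {X\<in>P. y \<in> X} + of_bool (y \<in> singly_covered_nonminimal P)
           + of_bool (y \<in> singly_covered_minimal P) = 2"
proof -
  obtain X where X: "X \<in> P" "y \<in> X" using linked_partition_Union[OF lp] y by blast
  show ?thesis
  proof (cases "\<forall>X'\<in>P. y \<in> X' \<longrightarrow> X' = X")
    case True
    then have "{X\<in>P. y \<in> X} = {X}" using X by blast
    moreover have "y \<in> singly_covered_nonminimal P \<longleftrightarrow> y \<noteq> Min X"
    proof
      assume "y \<in> singly_covered_nonminimal P"
      then obtain B where "B \<in> P" "y \<in> B" "y \<noteq> Min B"
        unfolding singly_covered_nonminimal_def by blast
      then show "y \<noteq> Min X" using True by blast
    next
      assume "y \<noteq> Min X"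
      then show "y \<in> singly_covered_nonminimal P"
        using True X unfolding singly_covered_nonminimal_def by blast
    qed
    moreover have "y \<in> singly_covered_minimal P \<longleftrightarrow> y = Min X"
    proof
      assume "y \<in> singly_covered_minimal P"
      then obtain B where "B \<in> P" "y = Min B" unfolding singly_covered_minimal_def by blast
      then show "y = Min X" using True linked_partition_blockD(4)[OF lp] by metis
    next
      assume "y = Min X"
      then show "y \<in> singly_covered_minimal P"
        using True X unfolding singly_covered_minimal_def by blast
    qed
    ultimately show ?thesis by auto
  next
    case False
    then obtain X' where X': "X' \<in> P" "y \<in> X'" "X' \<noteq> X" by blast
    then have "{X\<in>P. y \<in> X} = {X, X'}"
      using X linked_partition_no_triple_cover[OF lp X(1) X'(1)] by blast
    moreover have "y \<notin> singly_covered_nonminimal P" "y \<notin> singly_covered_minimal P"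
      using X X' unfolding singly_covered_nonminimal_def singly_covered_minimal_def by blast+
    ultimately show ?thesis using X'(3) by auto
  qed
qed

lemma linked_partition_sum_card:
  assumes lp: "linked_partition n P"
  shows "(\<Sum>X\<in>P. card X) + card (singly_covered_nonminimal P) + card (singly_covered_minimal P)
           = 2 * n"
proof -
  let ?U = "{1..n}"
  have fin: "finite P" using linked_partition_blockD(2)[OF lp] finite_subset[of P "Pow ?U"] by blast
  have "{y\<in>?U. y \<in> X} = X" if "X \<in> P" for X
    using linked_partition_blockD(2)[OF lp that] by blast
  then have "(\<Sum>X\<in>P. card X) = (\<Sum>X\<in>P. card {y\<in>?U. y \<in> X})" by simp
  also have "\<dots> = (\<Sum>y\<in>?U. card {X\<in>P. y \<in> X})"
    using sum.swap_restrict[OF fin finite_atLeastAtMost, where g="\<lambda>_ _. 1::nat" and R="\<lambda>X y. y \<in> X"]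
    by simp
  finally have "(\<Sum>X\<in>P. card X) + card (singly_covered_nonminimal P) + card (singly_covered_minimal P)
      = (\<Sum>y\<in>?U. card {X\<in>P. y \<in> X} + of_bool (y \<in> singly_covered_nonminimal P)
           + of_bool (y \<in> singly_covered_minimal P))"
    using singly_covered_nonminimal_subset[OF lp] singly_covered_minimal_subset[OF lp]
    by (simp add: sum.distrib Int_absorb1 Int_def[symmetric])
  also have "\<dots> = (\<Sum>y\<in>?U. 2)" using linked_partition_cover_count[OF lp] by simp
  finally show ?thesis by simp
qed

section \<open>Linked cycles\<close>

type_synonym arranged_block = "nat set \<times> (nat \<Rightarrow> nat)"

lemma linked_cycleD:
  assumes "linked_cycle n C"
  shows "linked_partition n (fst ` C)" "inj_on fst C" "\<And>B s. (B, s) \<in> C \<Longrightarrow> cyclic_arrangement B s"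
  using assms unfolding linked_cycle_def by auto

lemma linked_cycle_block_subset: "linked_cycle n C \<Longrightarrow> c \<in> C \<Longrightarrow> fst c \<subseteq> {1..n}"
  using linked_partition_blockD(2)[OF linked_cycleD(1)] by blast

lemma linked_cycle_Suc_notin: "linked_cycle N C \<Longrightarrow> c \<in> C \<Longrightarrow> Suc N \<notin> fst c"
  using linked_cycle_block_subset by fastforce

lemma inj_on_image_remove:
  "inj_on f C \<Longrightarrow> c \<in> C \<Longrightarrow> f ` (C - {c}) = f ` C - {f c}"
  using inj_on_image_set_diff[of f C C "{c}"] by auto

lemma linked_cycle_insertI:
  assumes "linked_partition n (insert B (fst ` C))" "inj_on fst C" "B \<notin> fst ` C"
    and "cyclic_arrangement B s" "\<And>B' s'. (B', s') \<in> C \<Longrightarrow> cyclic_arrangement B' s'"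
  shows "linked_cycle n (insert (B, s) C)"
  using assms unfolding linked_cycle_def by auto

definition linked_cycles :: "nat \<Rightarrow> nat \<Rightarrow> arranged_block set set" where
  "linked_cycles n m = {C. linked_cycle n C \<and> card (singly_covered_minimal (fst ` C)) = m}"

lemma f_lc_eq_card: "f_lc n m = card (linked_cycles n m)"
  unfolding f_lc_def linked_cycles_def ..

lemma finite_linked_cycles: "finite (linked_cycles n m)"
proof (rule finite_subset)
  show "linked_cycles n m \<subseteq> Pow (Pow {1..n} \<times> {s. s permutes {1..n}})"
  proof (intro subsetI PowI)
    fix C c assume "C \<in> linked_cycles n m" "c \<in> C"
    then have lc: "linked_cycle n C" unfolding linked_cycles_def by simp
    then have "fst c \<subseteq> {1..n}" using linked_cycle_block_subset \<open>c \<in> C\<close> by blast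
    moreover have "snd c permutes fst c"
      using linked_cycleD(3)[OF lc, of "fst c" "snd c"] \<open>c \<in> C\<close>
      by (simp add: cyclic_arrangement_def)
    ultimately show "c \<in> Pow {1..n} \<times> {s. s permutes {1..n}}"
      by (auto simp: mem_Times_iff intro: permutes_subset)
  qed
qed (simp add: finite_permutations)

lemma linked_cycle_finite: "linked_cycle n C \<Longrightarrow> finite C"
  using finite_subset[of "fst ` C" "Pow {1..n}"] linked_cycle_block_subset
    finite_imageD linked_cycleD(2) by blast

lemma linked_cycle_finite_block: "linked_cycle n C \<Longrightarrow> c \<in> C \<Longrightarrow> finite (fst c)"
  using linked_cycle_block_subset finite_subset by (metis finite_atLeastAtMost)

lemma nearly_disjoint_disjoint: "E \<inter> F = {} \<Longrightarrow> nearly_disjoint E F"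
  unfolding nearly_disjoint_def by blast

lemma nearly_disjoint_insert:
  assumes "nearly_disjoint B F" "n \<notin> F" "finite B" "Min (insert n B) = Min B"
  shows "nearly_disjoint (insert n B) F"
  using assms card_insert_le[of B n] unfolding nearly_disjoint_def
  by (metis IntD1 IntD2 IntI insertE order_less_le_trans)

section \<open>Inserting and removing the largest element\<close>

lemma linked_cycle_insert_singleton:
  assumes lc: "linked_cycle N C"
  defines "D \<equiv> insert ({Suc N}, id) C"
  shows "linked_cycle (Suc N) D"
    and "card (singly_covered_minimal (fst ` D)) = Suc (card (singly_covered_minimal (fst ` C)))"
proof -
  let ?P = "fst ` C"
  have lp: "linked_partition N ?P" using linked_cycleD(1)[OF lc] .
  have notin: "Suc N \<notin> X" if "X \<in> ?P" for X using linked_cycle_Suc_notin[OF lc] that by blast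
  have "linked_partition (Suc N) (insert {Suc N} ?P)"
  proof (rule linked_partition_insertI)
    show "\<forall>B\<in>?P. B \<noteq> {} \<and> B \<subseteq> {1..Suc N}" using linked_partition_blockD(1,2)[OF lp] by fastforce
    show "{Suc N} \<union> \<Union>?P = {1..Suc N}"
      using linked_partition_Union[OF lp] by (auto simp: atLeastAtMostSuc_conv)
    show "\<forall>B\<in>?P. \<forall>F\<in>?P. B \<noteq> F \<longrightarrow> nearly_disjoint B F"
      using linked_partition_nearly_disjoint[OF lp] by blast
    show "nearly_disjoint {Suc N} F" if "F \<in> ?P" for F
      using notin[OF that] by (intro nearly_disjoint_disjoint) auto
  qed auto
  then show "linked_cycle (Suc N) D"
    unfolding D_def using linked_cycleD[OF lc] notin
    by (intro linked_cycle_insertI) (auto simp: cyclic_arrangement_singleton_iff)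
  have "Suc N \<notin> singly_covered_minimal ?P" using singly_covered_minimal_subset[OF lp] by auto
  moreover have "{Suc N} \<notin> ?P" using notin by blast
  ultimately have "singly_covered_minimal (fst ` D) = insert (Suc N) (singly_covered_minimal ?P)"
    unfolding D_def using singly_covered_minimal_insert[of "{Suc N}" ?P] notin by auto
  moreover have "finite (singly_covered_minimal ?P)"
    using singly_covered_minimal_subset[OF lp] finite_subset by blast
  ultimately show "card (singly_covered_minimal (fst ` D)) = Suc (card (singly_covered_minimal ?P))"
    using \<open>Suc N \<notin> singly_covered_minimal ?P\<close> by simp
qed

lemma linked_cycle_insert_after:
  assumes lc: "linked_cycle N C" and Bs: "(B, s) \<in> C" and x: "x \<in> B"
  defines "D \<equiv> insert (insert (Suc N) B, s \<circ> transpose x (Suc N)) (C - {(B, s)})"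
  shows "linked_cycle (Suc N) D" and "singly_covered_minimal (fst ` D) = singly_covered_minimal (fst ` C)"
proof -
  let ?n = "Suc N" and ?P = "fst ` C"
  let ?P' = "?P - {B}"
  have lp: "linked_partition N ?P" and inj: "inj_on fst C" using linked_cycleD[OF lc] by auto
  have notin: "?n \<notin> X" if "X \<in> ?P" for X using linked_cycle_Suc_notin[OF lc] that by blast
  have P': "fst ` (C - {(B, s)}) = ?P'" using inj_on_image_remove[OF inj Bs] by simp
  have BP: "B \<in> ?P" using Bs by force
  note B = linked_partition_blockD[OF lp BP]
  have "Min B \<le> N" using B(2,4) by auto
  then have minB: "Min (insert ?n B) = Min B" using B(1,3) by simp
  have "linked_partition ?n (insert (insert ?n B) ?P')"
  proof (rule linked_partition_insertI)
    show "\<forall>X\<in>?P'. X \<noteq> {} \<and> X \<subseteq> {1..?n}" using linked_partition_blockD(1,2)[OF lp] by fastforce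
    show "insert ?n B \<subseteq> {1..?n}" using B(2) by auto
    show "insert ?n B \<union> \<Union>?P' = {1..?n}"
      using linked_partition_Union[OF lp] BP by (auto simp: atLeastAtMostSuc_conv)
    show "\<forall>X\<in>?P'. \<forall>F\<in>?P'. X \<noteq> F \<longrightarrow> nearly_disjoint X F"
      using linked_partition_nearly_disjoint[OF lp] by blast
    show "nearly_disjoint (insert ?n B) F" if "F \<in> ?P'" for F
      using that linked_partition_nearly_disjoint[OF lp BP, of F] notin B(3) minB
      by (auto intro: nearly_disjoint_insert)
  qed simp
  moreover have "inj_on fst (C - {(B, s)})" using inj by (rule inj_on_subset) auto
  moreover have "cyclic_arrangement (insert ?n B) (s \<circ> transpose x ?n)"
    using cyclic_arrangement_insert_after[OF linked_cycleD(3)[OF lc Bs] notin[OF BP] x] .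
  ultimately show "linked_cycle ?n D"
    unfolding D_def using notin linked_cycleD(3)[OF lc] P'
    by (intro linked_cycle_insertI) auto
  have "?n \<notin> singly_covered_minimal ?P'"
    using notin linked_partition_blockD(4)[OF lp] unfolding singly_covered_minimal_def by force
  then have "singly_covered_minimal (insert (insert ?n B) ?P') = singly_covered_minimal (insert B ?P')"
    using singly_covered_minimal_insert[of "insert ?n B" ?P'] singly_covered_minimal_insert[of B ?P']
      notin minB by auto
  also have "insert B ?P' = ?P" using BP by blast
  finally show "singly_covered_minimal (fst ` D) = singly_covered_minimal ?P"
    unfolding D_def using P' by simp
qed

lemma linked_cycle_insert_link:
  assumes lc: "linked_cycle N C" and a: "a \<in> singly_covered_nonminimal (fst ` C)"
  defines "D \<equiv> insert ({a, Suc N}, transpose a (Suc N)) C"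
  shows "linked_cycle (Suc N) D" and "singly_covered_minimal (fst ` D) = singly_covered_minimal (fst ` C)"
proof -
  let ?n = "Suc N" and ?P = "fst ` C"
  have lp: "linked_partition N ?P" using linked_cycleD(1)[OF lc] .
  have notin: "?n \<notin> X" if "X \<in> ?P" for X using linked_cycle_Suc_notin[OF lc] that by blast
  obtain B where B: "B \<in> ?P" "a \<in> B" "a \<noteq> Min B" "\<forall>B'\<in>?P. a \<in> B' \<longrightarrow> B' = B"
    using a unfolding singly_covered_nonminimal_def by blast
  have aN: "a \<in> {1..N}" using linked_partition_blockD(2)[OF lp B(1)] B(2) by auto
  then have min_an: "Min {a, ?n} = a" and card_an: "card {a, ?n} = 2" by auto
  have "linked_partition ?n (insert {a, ?n} ?P)"
  proof (rule linked_partition_insertI)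
    show "\<forall>X\<in>?P. X \<noteq> {} \<and> X \<subseteq> {1..?n}" using linked_partition_blockD(1,2)[OF lp] by fastforce
    show "{a, ?n} \<union> \<Union>?P = {1..?n}"
      using linked_partition_Union[OF lp] aN by (auto simp: atLeastAtMostSuc_conv)
    show "\<forall>X\<in>?P. \<forall>F\<in>?P. X \<noteq> F \<longrightarrow> nearly_disjoint X F"
      using linked_partition_nearly_disjoint[OF lp] by blast
    show "nearly_disjoint {a, ?n} F" if F: "F \<in> ?P" for F
    proof -
      have "i = a \<and> F = B" if "i \<in> {a, ?n} \<inter> F" for i
        using that notin[OF F] B(4) F by auto
      then show ?thesis using B(3) min_an card_an unfolding nearly_disjoint_def by auto
    qed
  qed (use aN in auto)
  moreover have "cyclic_arrangement {a, ?n} (transpose a ?n)"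
    using aN by (simp add: cyclic_arrangement_doubleton_iff)
  ultimately show "linked_cycle ?n D"
    unfolding D_def using notin linked_cycleD[OF lc] by (intro linked_cycle_insertI) auto
  have "a \<notin> singly_covered_minimal ?P"
  proof
    assume "a \<in> singly_covered_minimal ?P"
    then obtain X where "a = Min X" and uniq: "\<forall>B'\<in>?P. a \<in> B' \<longrightarrow> B' = X"
      unfolding singly_covered_minimal_def by blast
    have "B = X" using uniq B(1,2) by blast
    then show False using B(3) \<open>a = Min X\<close> by simp
  qed
  moreover have "?n \<notin> singly_covered_minimal ?P" using singly_covered_minimal_subset[OF lp] by auto
  moreover have "a \<in> \<Union>?P" using B(1,2) by blast
  moreover have "{a, ?n} \<notin> ?P" using notin by blast
  then have "singly_covered_minimal (fst ` D)
      = {y. y = Min {a, ?n} \<and> y \<notin> \<Union>?P} \<union> (singly_covered_minimal ?P - {a, ?n})"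
    unfolding D_def using singly_covered_minimal_insert by simp
  ultimately show "singly_covered_minimal (fst ` D) = singly_covered_minimal ?P"
    using min_an by auto
qed

lemma linked_cycle_remove_block:
  assumes lc: "linked_cycle (Suc N) D" and Bt: "(B, t) \<in> D" and nB: "Suc N \<in> B"
    and covered: "\<And>y. y \<in> B \<Longrightarrow> y \<noteq> Suc N \<Longrightarrow> \<exists>F\<in>fst ` D. F \<noteq> B \<and> y \<in> F"
  shows "linked_cycle N (D - {(B, t)})"
proof -
  have lp: "linked_partition (Suc N) (fst ` D)" and inj: "inj_on fst D"
    using linked_cycleD[OF lc] by auto
  have BP: "B \<in> fst ` D" using Bt by force
  note other = linked_partition_other_blocks[OF lp BP nB]
  have "linked_partition N (fst ` D - {B})"
    unfolding linked_partition_def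
  proof (intro conjI ballI impI)
    fix X assume "X \<in> fst ` D - {B}"
    then show "X \<noteq> {}" "X \<subseteq> {1..N}" using linked_partition_blockD(1)[OF lp] other by auto
  next
    show "\<Union>(fst ` D - {B}) = {1..N}"
    proof (intro equalityI subsetI)
      fix y assume y: "y \<in> {1..N}"
      then obtain X where X: "X \<in> fst ` D" "y \<in> X"
        using linked_partition_Union[OF lp] by (metis UnionE atLeastAtMost_iff le_SucI)
      show "y \<in> \<Union>(fst ` D - {B})"
      proof (cases "X = B")
        case True
        then show ?thesis using covered[of y] X(2) y by auto
      qed (use X in blast)
    qed (use other in blast)
  next
    fix E F assume "E \<in> fst ` D - {B}" "F \<in> fst ` D - {B}" "E \<noteq> F"
    then show "nearly_disjoint E F" using linked_partition_nearly_disjoint[OF lp] by blast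
  qed
  moreover have "inj_on fst (D - {(B, t)})" using inj by (rule inj_on_subset) auto
  moreover have "\<forall>(B', s) \<in> D - {(B, t)}. cyclic_arrangement B' s"
    using linked_cycleD(3)[OF lc] by auto
  ultimately show ?thesis unfolding linked_cycle_def using inj_on_image_remove[OF inj Bt] by simp
qed

lemma linked_cycle_remove_singleton:
  "linked_cycle (Suc N) D \<Longrightarrow> ({Suc N}, id) \<in> D \<Longrightarrow> linked_cycle N (D - {({Suc N}, id)})"
  by (rule linked_cycle_remove_block) auto

lemma linked_cycle_remove_link:
  assumes lc: "linked_cycle (Suc N) D" and h: "({a, Suc N}, t) \<in> D" and an: "a \<noteq> Suc N"
    and F: "F \<in> fst ` D" "a \<in> F" "F \<noteq> {a, Suc N}"
  shows "t = transpose a (Suc N)" and "linked_cycle N (D - {({a, Suc N}, t)})"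
    and "a \<in> singly_covered_nonminimal (fst ` (D - {({a, Suc N}, t)}))"
proof -
  let ?n = "Suc N" and ?P = "fst ` D"
  have lp: "linked_partition ?n ?P" and inj: "inj_on fst D" using linked_cycleD[OF lc] by auto
  show "t = transpose a ?n"
    using linked_cycleD(3)[OF lc h] an by (simp add: cyclic_arrangement_doubleton_iff)
  have BP: "{a, ?n} \<in> ?P" using h by force
  have other: "X \<subseteq> {1..N}" if "X \<in> ?P" "X \<noteq> {a, ?n}" for X
    using linked_partition_other_blocks[OF lp BP _ that] by simp
  show "linked_cycle N (D - {({a, ?n}, t)})"
    using F by (intro linked_cycle_remove_block[OF lc h]) auto
  have eq: "fst ` (D - {({a, ?n}, t)}) = ?P - {{a, ?n}}" using inj_on_image_remove[OF inj h] by simp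
  have "a \<le> N" using other[OF F(1,3)] F(2) by auto
  then have "Min {a, ?n} = a" by simp
  then have "a \<noteq> Min F"
    using linked_partition_common_element[OF lp BP F(1) F(3)[symmetric] _ F(2)] by auto
  moreover have "X = F" if "X \<in> ?P - {{a, ?n}}" "a \<in> X" for X
    using linked_partition_no_triple_cover[OF lp BP F(1), of X a] that F by blast
  ultimately show "a \<in> singly_covered_nonminimal (fst ` (D - {({a, ?n}, t)}))"
    unfolding eq singly_covered_nonminimal_def using F by blast
qed

definition has_link_block :: "nat \<Rightarrow> arranged_block set \<Rightarrow> bool" where
  "has_link_block n D \<longleftrightarrow>
     (\<exists>a t F. ({a, n}, t) \<in> D \<and> a \<noteq> n \<and> F \<in> fst ` D \<and> a \<in> F \<and> F \<noteq> {a, n})"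

lemma nearly_disjoint_remove:
  assumes nd: "nearly_disjoint B F" and "finite B" and min: "Min (B - {n}) = Min B"
    and isolated: "card (B - {n}) = 1 \<Longrightarrow> (B - {n}) \<inter> F = {}"
  shows "nearly_disjoint (B - {n}) F"
  unfolding nearly_disjoint_def
proof
  fix i assume i: "i \<in> (B - {n}) \<inter> F"
  then have "card (B - {n}) \<noteq> 0" "card (B - {n}) \<noteq> 1" using \<open>finite B\<close> isolated by auto
  then show "(i = Min (B - {n}) \<and> 1 < card (B - {n}) \<and> i \<noteq> Min F)
      \<or> (i = Min F \<and> 1 < card F \<and> i \<noteq> Min (B - {n}))"
    using nd i min unfolding nearly_disjoint_def by auto
qed

lemma linked_partition_remove_from_block:
  assumes lp: "linked_partition (Suc N) P" and BP: "B \<in> P" and nB: "Suc N \<in> B"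
    and ne: "B \<noteq> {Suc N}"
    and isolated: "\<And>F. card (B - {Suc N}) = 1 \<Longrightarrow> F \<in> P \<Longrightarrow> F \<noteq> B \<Longrightarrow> (B - {Suc N}) \<inter> F = {}"
  shows "linked_partition N (insert (B - {Suc N}) (P - {B}))" and "B - {Suc N} \<notin> P"
proof -
  define B0 where "B0 = B - {Suc N}"
  note B = linked_partition_blockD[OF lp BP]
  note other = linked_partition_other_blocks[OF lp BP nB]
  have Bi: "B = insert (Suc N) B0" and nB0: "Suc N \<notin> B0" using nB unfolding B0_def by auto
  have B0ne: "B0 \<noteq> {}" using ne Bi by auto
  have B0fin: "finite B0" using B(3) unfolding B0_def by simp
  have B0sub: "B0 \<subseteq> {1..N}" using B(2) unfolding B0_def by (auto simp: le_Suc_eq)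
  have "Min B0 \<le> N" using B0sub Min_in[OF B0fin B0ne] by auto
  then have minB: "Min B0 = Min B" using Bi B0fin B0ne by simp
  show "B - {Suc N} \<notin> P" unfolding B0_def[symmetric]
  proof
    assume "B0 \<in> P"
    moreover have "B0 \<noteq> B" "Min B0 \<in> B0" "Min B0 \<in> B" using Min_in[OF B0fin B0ne] Bi nB0 by auto
    ultimately show False
      using linked_partition_common_element[OF lp BP, of B0 "Min B0"] minB by auto
  qed
  show "linked_partition N (insert (B - {Suc N}) (P - {B}))" unfolding B0_def[symmetric]
  proof (rule linked_partition_insertI)
    show "\<forall>X\<in>P - {B}. X \<noteq> {} \<and> X \<subseteq> {1..N}" using other linked_partition_blockD(1)[OF lp] by blast
    show "B0 \<union> \<Union>(P - {B}) = {1..N}"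
    proof (intro equalityI subsetI)
      fix y assume y: "y \<in> {1..N}"
      then obtain X where X: "X \<in> P" "y \<in> X"
        using linked_partition_Union[OF lp] by (metis UnionE atLeastAtMost_iff le_SucI)
      then show "y \<in> B0 \<union> \<Union>(P - {B})" using y unfolding B0_def by (cases "X = B") auto
    qed (use B0sub other in blast)
    show "\<forall>X\<in>P - {B}. \<forall>F\<in>P - {B}. X \<noteq> F \<longrightarrow> nearly_disjoint X F"
      using linked_partition_nearly_disjoint[OF lp] by blast
    show "nearly_disjoint B0 F" if "F \<in> P - {B}" for F
    proof -
      have F: "F \<in> P" "B \<noteq> F" using that by auto
      show ?thesis unfolding B0_def
        using nearly_disjoint_remove[OF linked_partition_nearly_disjoint[OF lp BP F] B(3)
            minB[unfolded B0_def] isolated[OF _ F(1) F(2)[symmetric]]] .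
    qed
  qed (use B0ne B0sub in auto)
qed

lemma linked_cycle_remove_from_block:
  assumes lc: "linked_cycle (Suc N) D" and Bt: "(B, t) \<in> D" and nB: "Suc N \<in> B"
    and no_singleton: "({Suc N}, id) \<notin> D" and no_link: "\<not> has_link_block (Suc N) D"
  defines "B0 \<equiv> B - {Suc N}" and "s \<equiv> transpose (Suc N) (t (Suc N)) \<circ> t"
    and "x \<equiv> inv t (Suc N)"
  defines "C \<equiv> insert (B0, s) (D - {(B, t)})"
  shows "linked_cycle N C" and "(B0, s) \<in> C" and "x \<in> B0"
    and "D = insert (insert (Suc N) B0, s \<circ> transpose x (Suc N)) (C - {(B0, s)})"
proof -
  let ?n = "Suc N" and ?P = "fst ` D"
  have lp: "linked_partition ?n ?P" and inj: "inj_on fst D" using linked_cycleD[OF lc] by auto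
  have BP: "B \<in> ?P" using Bt by force
  have Bi: "B = insert ?n B0" and nB0: "?n \<notin> B0" using nB unfolding B0_def by auto
  have ne: "B \<noteq> {?n}"
  proof
    assume "B = {?n}"
    then have "t = id" using linked_cycleD(3)[OF lc Bt] by (simp add: cyclic_arrangement_singleton_iff)
    then show False using no_singleton Bt \<open>B = {?n}\<close> by simp
  qed
  have isolated: "B0 \<inter> F = {}" if "card B0 = 1" "F \<in> ?P" "F \<noteq> B" for F
  proof (rule ccontr)
    assume "B0 \<inter> F \<noteq> {}"
    moreover obtain a where "B0 = {a}" using \<open>card B0 = 1\<close> card_1_singletonE by blast
    ultimately have "a \<noteq> ?n" "a \<in> F" "({a, ?n}, t) \<in> D" "F \<noteq> {a, ?n}"
      using nB0 Bi Bt that(3) by (auto simp: insert_commute)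
    then have "has_link_block ?n D"
      unfolding has_link_block_def using that(2) by (intro exI[of _ a] exI[of _ t] exI[of _ F]) simp
    then show False using no_link by simp
  qed
  note lp' = linked_partition_remove_from_block[OF lp BP nB ne isolated[unfolded B0_def]]
  have cyc: "cyclic_arrangement (insert ?n B0) t" using linked_cycleD(3)[OF lc Bt] Bi by simp
  note rem = cyclic_arrangement_remove[OF cyc nB0, folded s_def x_def]
  have B0ne: "B0 \<noteq> {}" using ne Bi by auto
  show "x \<in> B0" using rem(2)[OF B0ne] .
  have "fst ` (D - {(B, t)}) = ?P - {B}" using inj_on_image_remove[OF inj Bt] by simp
  moreover have "inj_on fst (D - {(B, t)})" using inj by (rule inj_on_subset) auto
  ultimately show "linked_cycle N C"
    unfolding C_def using lp' rem(1)[OF B0ne] linked_cycleD(3)[OF lc]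
    by (intro linked_cycle_insertI) (auto simp: B0_def)
  show "(B0, s) \<in> C" unfolding C_def by simp
  have "(B0, s) \<notin> D" using lp'(2) unfolding B0_def by force
  then have "C - {(B0, s)} = D - {(B, t)}" unfolding C_def by auto
  then show "D = insert (insert ?n B0, s \<circ> transpose x ?n) (C - {(B0, s)})"
    using rem(3)[OF B0ne] Bi Bt by auto
qed

lemma bij_betw_insert_singleton:
  "bij_betw (insert ({Suc N}, id)) (linked_cycles N k)
     {D \<in> linked_cycles (Suc N) (Suc k). ({Suc N}, id) \<in> D}"
proof (rule bij_betw_byWitness[where f' = "\<lambda>D. D - {({Suc N}, id)}"])
  have notin: "({Suc N}, id) \<notin> C" if "C \<in> linked_cycles N k" for C
    using that linked_cycle_Suc_notin[of N C "({Suc N}, id)"] unfolding linked_cycles_def by auto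
  then show "\<forall>C\<in>linked_cycles N k. insert ({Suc N}, id) C - {({Suc N}, id)} = C" by simp
  show "\<forall>D\<in>{D \<in> linked_cycles (Suc N) (Suc k). ({Suc N}, id) \<in> D}.
      insert ({Suc N}, id) (D - {({Suc N}, id)}) = D" by auto
  show "insert ({Suc N}, id) ` linked_cycles N k
      \<subseteq> {D \<in> linked_cycles (Suc N) (Suc k). ({Suc N}, id) \<in> D}"
    using linked_cycle_insert_singleton unfolding linked_cycles_def by auto
  show "(\<lambda>D. D - {({Suc N}, id)}) ` {D \<in> linked_cycles (Suc N) (Suc k). ({Suc N}, id) \<in> D}
      \<subseteq> linked_cycles N k"
  proof clarify
    fix D assume "D \<in> linked_cycles (Suc N) (Suc k)" and e: "({Suc N}, id) \<in> D"
    then have lc: "linked_cycle (Suc N) D" and card: "card (singly_covered_minimal (fst ` D)) = Suc k"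
      unfolding linked_cycles_def by auto
    have lc': "linked_cycle N (D - {({Suc N}, id)})" using linked_cycle_remove_singleton[OF lc e] .
    have "D = insert ({Suc N}, id) (D - {({Suc N}, id)})" using e by auto
    then show "D - {({Suc N}, id)} \<in> linked_cycles N k"
      using lc' card linked_cycle_insert_singleton(2)[OF lc'] unfolding linked_cycles_def by simp
  qed
qed

lemma linked_cycles_Suc_notin: "C \<in> linked_cycles N m \<Longrightarrow> Suc N \<in> X \<Longrightarrow> (X, t) \<notin> C"
  using linked_cycle_Suc_notin[of N C "(X, t)"] unfolding linked_cycles_def by auto

definition attach_link :: "nat \<Rightarrow> arranged_block set \<times> nat \<Rightarrow> arranged_block set" where
  "attach_link n = (\<lambda>(C, a). insert ({a, n}, transpose a n) C)"

lemma inj_on_attach_link: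
  "inj_on (attach_link (Suc N)) (SIGMA C:linked_cycles N m. singly_covered_nonminimal (fst ` C))"
proof (rule inj_onI, clarify)
  let ?n = "Suc N"
  have a_le: "a \<noteq> ?n" if "C \<in> linked_cycles N m" "a \<in> singly_covered_nonminimal (fst ` C)" for C a
    using that singly_covered_nonminimal_subset[OF linked_cycleD(1), of N C] unfolding linked_cycles_def
    by auto
  fix C1 a1 C2 a2
  assume 1: "C1 \<in> linked_cycles N m" "a1 \<in> singly_covered_nonminimal (fst ` C1)"
    and 2: "C2 \<in> linked_cycles N m" "a2 \<in> singly_covered_nonminimal (fst ` C2)"
    and "attach_link ?n (C1, a1) = attach_link ?n (C2, a2)"
  then have eq: "insert ({a1, ?n}, transpose a1 ?n) C1 = insert ({a2, ?n}, transpose a2 ?n) C2"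
    unfolding attach_link_def by simp
  have "({a1, ?n}, transpose a1 ?n) \<in> insert ({a2, ?n}, transpose a2 ?n) C2"
    unfolding eq[symmetric] by simp
  moreover have "({a1, ?n}, transpose a1 ?n) \<notin> C2" using linked_cycles_Suc_notin[OF 2(1)] by simp
  ultimately have "{a1, ?n} = {a2, ?n}" by simp
  then have "a1 = a2" using a_le[OF 1] a_le[OF 2] by (auto simp: doubleton_eq_iff)
  have "C1 = insert ({a1, ?n}, transpose a1 ?n) C1 - {({a1, ?n}, transpose a1 ?n)}"
    using linked_cycles_Suc_notin[OF 1(1)] by simp
  also have "\<dots> = insert ({a2, ?n}, transpose a2 ?n) C2 - {({a2, ?n}, transpose a2 ?n)}"
    using eq \<open>a1 = a2\<close> by simp
  also have "\<dots> = C2" using linked_cycles_Suc_notin[OF 2(1)] by simp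
  finally show "C1 = C2 \<and> a1 = a2" using \<open>a1 = a2\<close> by simp
qed

lemma attach_link_image:
  "attach_link (Suc N) ` (SIGMA C:linked_cycles N m. singly_covered_nonminimal (fst ` C))
     = {D \<in> linked_cycles (Suc N) m. ({Suc N}, id) \<notin> D \<and> has_link_block (Suc N) D}"
  (is "?f ` ?A = ?B")
proof (intro equalityI subsetI)
  let ?n = "Suc N"
  fix D assume "D \<in> ?f ` ?A"
  then obtain C a where C: "C \<in> linked_cycles N m" and a: "a \<in> singly_covered_nonminimal (fst ` C)"
    and D: "D = insert ({a, ?n}, transpose a ?n) C" by (auto simp: attach_link_def)
  have lc: "linked_cycle N C" using C unfolding linked_cycles_def by simp
  have an: "a \<noteq> ?n" using singly_covered_nonminimal_subset[OF linked_cycleD(1)[OF lc]] a by auto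
  obtain B s where "(B, s) \<in> C" "a \<in> B" using a unfolding singly_covered_nonminimal_def by auto
  moreover from this have "?n \<notin> B" using linked_cycles_Suc_notin[OF C] by blast
  ultimately have "has_link_block ?n D"
    unfolding has_link_block_def D using an
    by (intro exI[of _ a] exI[of _ "transpose a ?n"] exI[of _ B]) force
  moreover have "({?n}, id) \<notin> D"
    unfolding D using linked_cycles_Suc_notin[OF C] an by (auto simp: doubleton_eq_iff)
  ultimately show "D \<in> ?B"
    using linked_cycle_insert_link[OF lc a] C unfolding D linked_cycles_def by simp
next
  let ?n = "Suc N"
  fix D assume "D \<in> ?B"
  then have lcD: "linked_cycle ?n D" and card: "card (singly_covered_minimal (fst ` D)) = m"
    and "has_link_block ?n D" unfolding linked_cycles_def by auto
  then obtain a t F where h: "({a, ?n}, t) \<in> D" "a \<noteq> ?n" "F \<in> fst ` D" "a \<in> F" "F \<noteq> {a, ?n}"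
    unfolding has_link_block_def by blast
  note rem = linked_cycle_remove_link[OF lcD h]
  let ?C = "D - {({a, ?n}, t)}"
  have D: "D = insert ({a, ?n}, transpose a ?n) ?C" using h(1) rem(1) by auto
  then have "?C \<in> linked_cycles N m"
    using rem(2) card linked_cycle_insert_link(2)[OF rem(2,3)] unfolding linked_cycles_def by simp
  then have "(?C, a) \<in> ?A" using rem(3) by simp
  moreover have "D = ?f (?C, a)" using D unfolding attach_link_def by simp
  ultimately show "D \<in> ?f ` ?A" by (rule rev_image_eqI)
qed

lemma bij_betw_attach_link:
  "bij_betw (attach_link (Suc N)) (SIGMA C:linked_cycles N m. singly_covered_nonminimal (fst ` C))
     {D \<in> linked_cycles (Suc N) m. ({Suc N}, id) \<notin> D \<and> has_link_block (Suc N) D}"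
  unfolding bij_betw_def using inj_on_attach_link attach_link_image by blast

definition extend_block :: "nat \<Rightarrow> arranged_block set \<times> arranged_block \<times> nat \<Rightarrow> arranged_block set"
  where "extend_block n = (\<lambda>(C, (B, s), x). insert (insert n B, s \<circ> transpose x n) (C - {(B, s)}))"

lemma inj_on_extend_block:
  "inj_on (extend_block (Suc N)) (SIGMA C:linked_cycles N m. SIGMA c:C. fst c)"
proof (rule inj_onI)
  let ?n = "Suc N"
  fix p1 p2
  assume p: "p1 \<in> (SIGMA C:linked_cycles N m. SIGMA c:C. fst c)" "p2 \<in> (SIGMA C:linked_cycles N m. SIGMA c:C. fst c)"
    and "extend_block ?n p1 = extend_block ?n p2"
  obtain C1 B1 s1 x1 where p1: "p1 = (C1, (B1, s1), x1)" by (metis prod.collapse)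
  obtain C2 B2 s2 x2 where p2: "p2 = (C2, (B2, s2), x2)" by (metis prod.collapse)
  have 1: "C1 \<in> linked_cycles N m" "(B1, s1) \<in> C1" "x1 \<in> B1" using p(1) p1 by auto
  have 2: "C2 \<in> linked_cycles N m" "(B2, s2) \<in> C2" "x2 \<in> B2" using p(2) p2 by auto
  let ?e1 = "(insert ?n B1, s1 \<circ> transpose x1 ?n)" and ?e2 = "(insert ?n B2, s2 \<circ> transpose x2 ?n)"
  have eq: "insert ?e1 (C1 - {(B1, s1)}) = insert ?e2 (C2 - {(B2, s2)})"
    using \<open>extend_block ?n p1 = extend_block ?n p2\<close> unfolding p1 p2 extend_block_def by simp
  have "?e1 \<in> insert ?e2 (C2 - {(B2, s2)})" unfolding eq[symmetric] by simp
  moreover have "?e1 \<notin> C2" using linked_cycles_Suc_notin[OF 2(1)] by simp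
  ultimately have e: "?e1 = ?e2" by simp
  have nB1: "?n \<notin> B1" and nB2: "?n \<notin> B2"
    using linked_cycles_Suc_notin[OF 1(1)] linked_cycles_Suc_notin[OF 2(1)] 1(2) 2(2) by auto
  then have B: "B1 = B2" using e by (metis Pair_inject insert_ident)
  have s1: "s1 permutes B1" and s2: "s2 permutes B2"
    using 1 2 linked_cycleD(3) unfolding linked_cycles_def cyclic_arrangement_def by auto
  let ?t = "s1 \<circ> transpose x1 ?n"
  txt \<open>Both \<open>x1\<close> and \<open>x2\<close> are the predecessor of \<open>n\<close> in the common cycle \<open>?t\<close>.\<close>
  have "?t x1 = ?n" "?t x2 = ?n"
    using e permutes_not_in[OF s1 nB1] permutes_not_in[OF s2 nB2]
    by (auto simp: fun_eq_iff dest: spec[of _ x2])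
  moreover have "inj ?t" using s1 by (simp add: permutes_inj inj_compose)
  ultimately have x: "x1 = x2" using injD[of ?t x1 x2] by simp
  have "s1 = ?t \<circ> transpose x1 ?n" by (simp add: comp_assoc)
  also have "\<dots> = s2" using e x by (simp add: comp_assoc)
  finally have s: "s1 = s2" .
  have "C1 = insert (B1, s1) (insert ?e1 (C1 - {(B1, s1)}) - {?e1})"
    using 1(2) linked_cycles_Suc_notin[OF 1(1), of "insert ?n B1"] by auto
  also have "\<dots> = insert (B2, s2) (insert ?e2 (C2 - {(B2, s2)}) - {?e2})"
    using eq e B s by simp
  also have "\<dots> = C2" using 2(2) linked_cycles_Suc_notin[OF 2(1), of "insert ?n B2"] by auto
  finally show "p1 = p2" using B s x unfolding p1 p2 by simp
qed

lemma extend_block_mem: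
  assumes C: "C \<in> linked_cycles N m" and Bs: "(B, s) \<in> C" and x: "x \<in> B"
  shows "extend_block (Suc N) (C, (B, s), x)
           \<in> {D \<in> linked_cycles (Suc N) m. ({Suc N}, id) \<notin> D \<and> \<not> has_link_block (Suc N) D}"
proof -
  let ?n = "Suc N" and ?D = "extend_block (Suc N) (C, (B, s), x)"
  have D: "?D = insert (insert ?n B, s \<circ> transpose x ?n) (C - {(B, s)})"
    unfolding extend_block_def by simp
  have lc: "linked_cycle N C" using C unfolding linked_cycles_def by simp
  have lp: "linked_partition N (fst ` C)" and inj: "inj_on fst C" using linked_cycleD[OF lc] by auto
  have nB: "?n \<notin> B" using linked_cycles_Suc_notin[OF C, of B s] Bs by auto
  have top: "c = (insert ?n B, s \<circ> transpose x ?n)" if "c \<in> ?D" "?n \<in> fst c" for c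
    using that linked_cycles_Suc_notin[OF C, of "fst c" "snd c"] unfolding D by auto
  have "({?n}, id) \<notin> ?D" using top[of "({?n}, id)"] x nB by auto
  moreover have "\<not> has_link_block ?n ?D"
  proof
    assume "has_link_block ?n ?D"
    then obtain a t F where h: "({a, ?n}, t) \<in> ?D" "a \<noteq> ?n" "F \<in> fst ` ?D" "a \<in> F" "F \<noteq> {a, ?n}"
      unfolding has_link_block_def by blast
    have "insert ?n B = {a, ?n}" using top[OF h(1)] by simp
    then have Ba: "B = {a}" using nB h(2) by auto
    have "F \<in> fst ` C" "F \<noteq> B"
      using h(3,5) inj_on_image_remove[OF inj Bs] \<open>insert ?n B = {a, ?n}\<close> unfolding D by auto
    then show False
      using linked_partition_common_element[of N "fst ` C" B F a] lp Bs h(4) Ba by force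
  qed
  ultimately show ?thesis
    using linked_cycle_insert_after[OF lc Bs x] C unfolding D linked_cycles_def by simp
qed

lemma extend_block_surj:
  assumes "D \<in> {D \<in> linked_cycles (Suc N) m. ({Suc N}, id) \<notin> D \<and> \<not> has_link_block (Suc N) D}"
  shows "D \<in> extend_block (Suc N) ` (SIGMA C:linked_cycles N m. SIGMA c:C. fst c)"
proof -
  let ?n = "Suc N"
  have lcD: "linked_cycle ?n D" and card: "card (singly_covered_minimal (fst ` D)) = m"
    and no_singleton: "({?n}, id) \<notin> D" and no_link: "\<not> has_link_block ?n D"
    using assms unfolding linked_cycles_def by auto
  have "?n \<in> \<Union>(fst ` D)" using linked_partition_Union[OF linked_cycleD(1)[OF lcD]] by simp
  then obtain B t where Bt: "(B, t) \<in> D" and nB: "?n \<in> B" by auto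
  let ?B0 = "B - {?n}" and ?s = "transpose ?n (t ?n) \<circ> t" and ?x = "inv t ?n"
  let ?C = "insert (?B0, ?s) (D - {(B, t)})"
  note rem = linked_cycle_remove_from_block[OF lcD Bt nB no_singleton no_link]
  have "singly_covered_minimal (fst ` D) = singly_covered_minimal (fst ` ?C)"
    using trans[OF arg_cong[of _ _ "\<lambda>X. singly_covered_minimal (fst ` X)", OF rem(4)]
        linked_cycle_insert_after(2)[OF rem(1,2,3)]] .
  then have "(?C, (?B0, ?s), ?x) \<in> (SIGMA C:linked_cycles N m. SIGMA c:C. fst c)"
    using rem(1,2,3) card unfolding linked_cycles_def by simp
  moreover have "D = extend_block ?n (?C, (?B0, ?s), ?x)"
    using rem(4) unfolding extend_block_def by simp
  ultimately show ?thesis by (rule rev_image_eqI)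
qed

lemma bij_betw_extend_block:
  "bij_betw (extend_block (Suc N)) (SIGMA C:linked_cycles N m. SIGMA c:C. fst c)
     {D \<in> linked_cycles (Suc N) m. ({Suc N}, id) \<notin> D \<and> \<not> has_link_block (Suc N) D}"
  unfolding bij_betw_def
proof (intro conjI inj_on_extend_block equalityI subsetI)
  fix D assume "D \<in> extend_block (Suc N) ` (SIGMA C:linked_cycles N m. SIGMA c:C. fst c)"
  then show "D \<in> {D \<in> linked_cycles (Suc N) m. ({Suc N}, id) \<notin> D \<and> \<not> has_link_block (Suc N) D}"
    using extend_block_mem by auto
qed (rule extend_block_surj)

section \<open>The recurrence and its closed-form solution\<close>

lemma linked_cycle_sum_card:
  assumes lc: "linked_cycle N C"
  shows "card (SIGMA c:C. fst c) + card (singly_covered_nonminimal (fst ` C))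
           + card (singly_covered_minimal (fst ` C)) = 2 * N"
proof -
  have "card (SIGMA c:C. fst c) = (\<Sum>c\<in>C. card (fst c))"
    using linked_cycle_finite[OF lc] linked_cycle_finite_block[OF lc] by (intro card_SigmaI) auto
  also have "\<dots> = (\<Sum>X\<in>fst ` C. card X)" using sum.reindex[OF linked_cycleD(2)[OF lc], of card] by simp
  finally show ?thesis using linked_partition_sum_card[OF linked_cycleD(1)[OF lc]] by simp
qed

lemma card_linked_cycles_link_class:
  "card {D \<in> linked_cycles (Suc N) m. ({Suc N}, id) \<notin> D \<and> has_link_block (Suc N) D}
     = (\<Sum>C\<in>linked_cycles N m. card (singly_covered_nonminimal (fst ` C)))"
proof -
  have "finite (singly_covered_nonminimal (fst ` C))" if "C \<in> linked_cycles N m" for C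
    using that singly_covered_nonminimal_subset[of N "fst ` C"] linked_cycleD(1)
    unfolding linked_cycles_def by (blast intro: finite_subset)
  then show ?thesis
    using bij_betw_same_card[OF bij_betw_attach_link, symmetric] finite_linked_cycles
    by (simp add: card_SigmaI)
qed

lemma card_linked_cycles_extension_class:
  "card {D \<in> linked_cycles (Suc N) m. ({Suc N}, id) \<notin> D \<and> \<not> has_link_block (Suc N) D}
     = (\<Sum>C\<in>linked_cycles N m. card (SIGMA c:C. fst c))"
proof -
  have "finite (SIGMA c:C. fst c)" if "C \<in> linked_cycles N m" for C
    using that linked_cycle_finite linked_cycle_finite_block
    unfolding linked_cycles_def by (blast intro: finite_SigmaI)
  then show ?thesis
    using bij_betw_same_card[OF bij_betw_extend_block, symmetric] finite_linked_cycles
    by (simp add: card_SigmaI)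
qed

lemma card_linked_cycles_Suc:
  "card (linked_cycles (Suc N) (Suc k))
     = card (linked_cycles N k) + (2 * N - Suc k) * card (linked_cycles N (Suc k))"
proof -
  let ?n = "Suc N" and ?L = "linked_cycles (Suc N) (Suc k)" and ?L' = "linked_cycles N (Suc k)"
  let ?S = "{D \<in> ?L. ({?n}, id) \<in> D}"
  let ?K = "{D \<in> ?L. ({?n}, id) \<notin> D \<and> has_link_block ?n D}"
  let ?E = "{D \<in> ?L. ({?n}, id) \<notin> D \<and> \<not> has_link_block ?n D}"
  have fin: "finite ?S" "finite ?K" "finite ?E" using finite_linked_cycles by auto
  have "card ?L = card (?S \<union> (?K \<union> ?E))" by (rule arg_cong[where f = card]) blast
  also have "\<dots> = card ?S + (card ?K + card ?E)" using fin by (subst card_Un_disjoint; auto)+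
  also have "card ?S = card (linked_cycles N k)"
    using bij_betw_same_card[OF bij_betw_insert_singleton] by simp
  also have "card ?K + card ?E = (\<Sum>C\<in>?L'. card (singly_covered_nonminimal (fst ` C))
                                              + card (SIGMA c:C. fst c))"
    unfolding card_linked_cycles_link_class card_linked_cycles_extension_class sum.distrib ..
  also have "\<dots> = (\<Sum>C\<in>?L'. 2 * N - Suc k)"
  proof (rule sum.cong[OF refl])
    fix C assume "C \<in> ?L'"
    then have "linked_cycle N C" "card (singly_covered_minimal (fst ` C)) = Suc k"
      unfolding linked_cycles_def by auto
    then show "card (singly_covered_nonminimal (fst ` C)) + card (SIGMA c:C. fst c) = 2 * N - Suc k"
      using linked_cycle_sum_card[of N C] by linarith
  qed
  finally show ?thesis by (simp add: f_lc_eq_card)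
qed

lemma f_lc_recurrence:
  "f_lc (Suc N) (Suc k) = f_lc N k + (2 * N - Suc k) * f_lc N (Suc k)"
  unfolding f_lc_eq_card by (rule card_linked_cycles_Suc)

lemma f_lc_0_0: "f_lc 0 0 = 1"
proof -
  have "C = {}" if "linked_cycle 0 C" for C
    using linked_cycle_block_subset[OF that] linked_partition_blockD(1)[OF linked_cycleD(1)[OF that]]
    by fastforce
  moreover have "linked_cycle 0 {}" by (simp add: linked_cycle_def linked_partition_def)
  ultimately have "linked_cycles 0 0 = {{}}"
    unfolding linked_cycles_def singly_covered_minimal_def by auto
  then show ?thesis by (simp add: f_lc_eq_card)
qed

lemma f_lc_eq_0_if_less:
  assumes "n < m"
  shows "f_lc n m = 0"
proof -
  have "card (singly_covered_minimal (fst ` C)) \<le> n" if "linked_cycle n C" for C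
    using card_mono[OF _ singly_covered_minimal_subset[OF linked_cycleD(1)[OF that]]] by simp
  then have "linked_cycles n m = {}" using assms unfolding linked_cycles_def by fastforce
  then show ?thesis by (simp add: f_lc_eq_card)
qed

lemma one_in_singly_covered_minimal:
  assumes lp: "linked_partition n P" and n: "1 \<le> n"
  shows "1 \<in> singly_covered_minimal P"
proof -
  have min1: "Min B = 1" if "B \<in> P" "1 \<in> B" for B
  proof -
    note B = linked_partition_blockD[OF lp that(1)]
    have "Min B \<le> 1" using Min_le[OF B(3) that(2)] .
    moreover have "1 \<le> Min B" using B(2,4) by auto
    ultimately show ?thesis by simp
  qed
  have "1 \<in> \<Union>P" using linked_partition_Union[OF lp] n by simp
  then obtain B where B: "B \<in> P" "1 \<in> B" by blast
  have uniq: "B' = B" if "B' \<in> P" "1 \<in> B'" for B'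
  proof (rule ccontr)
    assume "B' \<noteq> B"
    then show False
      using linked_partition_common_element[OF lp B(1) that(1) _ B(2) that(2)] min1[OF B] min1[OF that]
      by auto
  qed
  show ?thesis
    unfolding singly_covered_minimal_def using B(1) min1[OF B] uniq by (intro CollectI bexI[of _ B]) auto
qed

lemma f_lc_0_right:
  assumes "1 \<le> n"
  shows "f_lc n 0 = 0"
proof -
  have "singly_covered_minimal (fst ` C) \<noteq> {}" if "linked_cycle n C" for C
    using one_in_singly_covered_minimal[OF linked_cycleD(1)[OF that] assms] by blast
  moreover have "finite (singly_covered_minimal (fst ` C))" if "linked_cycle n C" for C
    using singly_covered_minimal_subset[OF linked_cycleD(1)[OF that]] by (rule finite_subset) simp
  ultimately have "linked_cycles n 0 = {}" unfolding linked_cycles_def by (auto simp: card_gt_0_iff)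
  then show ?thesis by (simp add: f_lc_eq_card)
qed

lemma f_lc_diagonal: "f_lc n n = 1"
proof (induction n)
  case (Suc n)
  then show ?case using f_lc_recurrence[of n n] f_lc_eq_0_if_less[of n "Suc n"] by simp
qed (rule f_lc_0_0)

lemma f_lc_closed_form:
  "f_lc (Suc (k + j)) (Suc k) * (2 ^ j * fact k * fact j) = fact (k + 2 * j)"
proof (induction j arbitrary: k)
  case 0
  then show ?case using f_lc_diagonal by simp
next
  case (Suc j)
  note outer = Suc.IH
  show ?case
  proof (induction k)
    case 0
    have rec: "f_lc (Suc (Suc j)) 1 = (2 * j + 1) * f_lc (Suc j) 1"
      using f_lc_recurrence[of "Suc j" 0] f_lc_0_right[of "Suc j"] by simp
    have IH: "f_lc (Suc j) 1 * (2 ^ j * fact j) = fact (2 * j)" using outer[of 0] by simp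
    have "f_lc (Suc (Suc j)) 1 * (2 ^ Suc j * fact (Suc j))
        = (2 * j + 1) * (2 * j + 2) * (f_lc (Suc j) 1 * (2 ^ j * fact j))"
      unfolding rec by (simp add: algebra_simps)
    also have "\<dots> = fact (2 * Suc j)" unfolding IH by (simp add: algebra_simps)
    finally show ?case by simp
  next
    case (Suc k)
    let ?A = "f_lc (Suc (k + Suc j)) (Suc k)" and ?B = "f_lc (Suc (Suc k + j)) (Suc (Suc k))"
    let ?c = "2 ^ Suc j * fact k * fact (Suc j) :: nat" and ?d = "2 ^ j * fact (Suc k) * fact j :: nat"
    have rec: "f_lc (Suc (Suc k + Suc j)) (Suc (Suc k)) = ?A + (k + 2 * j + 2) * ?B"
      using f_lc_recurrence[of "Suc (Suc (k + j))" "Suc k"] by simp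
    have A: "?A * ?c = fact (k + 2 * j + 2)" using Suc.IH by simp
    have B: "?B * ?d = fact (k + 2 * j + 1)" using outer[of "Suc k"] by simp
    have "f_lc (Suc (Suc k + Suc j)) (Suc (Suc k)) * (2 ^ Suc j * fact (Suc k) * fact (Suc j))
        = (k + 1) * (?A * ?c) + (k + 2 * j + 2) * (2 * j + 2) * (?B * ?d)"
      unfolding rec by (simp add: algebra_simps)
    also have "\<dots> = (k + 1) * fact (k + 2 * j + 2) + (2 * j + 2) * fact (k + 2 * j + 2)"
      unfolding A B by (simp add: algebra_simps)
    also have "\<dots> = fact (Suc k + 2 * Suc j)" by (simp add: algebra_simps)
    finally show ?case .
  qed
qed

lemma f_lc_shift: "Suc k * f_lc (Suc N) (Suc (Suc k)) = (2 * N - Suc k) * f_lc N (Suc k)"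
proof (cases "N \<le> k")
  case True
  then show ?thesis using f_lc_eq_0_if_less[of "Suc N" "Suc (Suc k)"] f_lc_eq_0_if_less[of N "Suc k"] by simp
next
  case False
  then obtain j where N: "N = Suc (k + j)" by (metis add_Suc_right less_imp_Suc_add not_le)
  let ?c = "2 ^ j * fact k * fact j :: nat"
  have "Suc k * f_lc (Suc N) (Suc (Suc k)) * ?c
      = f_lc (Suc (Suc k + j)) (Suc (Suc k)) * (2 ^ j * fact (Suc k) * fact j)"
    unfolding N by (simp add: algebra_simps)
  also have "\<dots> = (k + 2 * j + 1) * fact (k + 2 * j)"
    unfolding f_lc_closed_form by simp
  also have "\<dots> = (2 * N - Suc k) * f_lc N (Suc k) * ?c"
    unfolding N using f_lc_closed_form[of k j] by (simp add: algebra_simps)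
  finally show ?thesis by simp
qed

theorem proposition4p6:
  shows "f_lc 1 1 = 1 \<and>
         (\<forall>n::nat. n \<ge> 1 \<longrightarrow> f_lc n 0 = 0) \<and>
         (\<forall>n m::nat. n < m \<longrightarrow> f_lc n m = 0) \<and>
         (\<forall>n m::nat. n \<ge> 2 \<longrightarrow> m \<ge> 1 \<longrightarrow>
             f_lc n m = m * f_lc n (m + 1) + f_lc (n - 1) (m - 1))"
proof (intro conjI allI impI)
  show "f_lc 1 1 = 1" by (rule f_lc_diagonal)
  show "f_lc n 0 = 0" if "n \<ge> 1" for n using that by (rule f_lc_0_right)
  show "f_lc n m = 0" if "n < m" for n m using that by (rule f_lc_eq_0_if_less)
  fix n m :: nat
  assume "n \<ge> 2" "m \<ge> 1"
  then obtain N k where "n = Suc N" "m = Suc k" by (cases n; cases m) auto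
  then show "f_lc n m = m * f_lc n (m + 1) + f_lc (n - 1) (m - 1)"
    using f_lc_recurrence[of N k] f_lc_shift[of k N] by simp
qed

end
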